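(* Let $M(\mathbb{1},\lambda,e,V)$ be the generic characteristic matrix of a $\mathbb{Z}^d$-periodic graph specialized at $z=\mathbb{1}=(1,\dots,1)$. Then $\det M(\mathbb{1},\lambda,e,V)$ is cancellation-free.
   Context: A $\mathbb{Z}^d$-periodic graph $\Gamma$ is a simple undirected graph of bounded degree with a free $\mathbb{Z}^d$-action by automorphisms with finitely many vertex and edge orbits; $W$ is a set of vertex-orbit representatives, identified with $[n]$. The generic characteristic matrix is $M(z,\lambda,e,V)=\lambda I_n-H(z,e,V)$, where $H(z,e,V)$ has $(v,u)$ entry $\delta_{v,u}V(v)-\sum_{\alpha\in\mathbb{Z}^d: v\sim\alpha+u}e_{(v,\alpha+u)}z^\alpha$ with independent indeterminates $e$ (one per edge orbit) and $V(v)$ (one per $v\in W$). For an $n\times n$ polynomial matrix $M=(f_{i,j})$, $\det M=\sum_{w\in S_n}\mathrm{sgn}(w)M_w$ with $M_w=\prod_i f_{i,w(i)}$, and $\det M$ is cancellation-free if for every $w$ with $M_w\neq0$ the support (set of monomials, here in $\lambda,e,V$) of $M_w$ is contained in the support of $\det M$. *)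

theory Defs
  imports Main "HOL-Library.Poly_Mapping" "HOL-Library.Function_Algebras"
    "HOL-Combinatorics.Permutations"
begin

text \<open>Vertices of a Z^d-periodic graph with vertex-orbit representatives W = [n] = {0..<n}:
  the vertex alpha + v (v in W, alpha in Z^d) is encoded as the pair (v, alpha).
  Z^d is rendered as functions 'd => int for a finite index type 'd.\<close>

type_synonym 'd vtx = "nat \<times> ('d \<Rightarrow> int)"

definition translate :: "('d \<Rightarrow> int) \<Rightarrow> 'd vtx \<Rightarrow> 'd vtx" where
  "translate c x = (fst x, snd x + c)"

definition periodic_graph :: "nat \<Rightarrow> ('d::finite vtx \<Rightarrow> 'd vtx \<Rightarrow> bool) \<Rightarrow> bool" where
  "periodic_graph n adj \<longleftrightarrow>
     (\<forall>x y. adj x y \<longrightarrow> fst x < n \<and> fst y < n) \<and>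
     (\<forall>x y. adj x y \<longrightarrow> adj y x) \<and>
     (\<forall>x. \<not> adj x x) \<and>
     (\<forall>x y c. adj (translate c x) (translate c y) \<longleftrightarrow> adj x y) \<and>
     (\<exists>D::nat. \<forall>x. finite {y. adj x y} \<and> card {y. adj x y} \<le> D)"

definition edge_orbit :: "'d vtx \<Rightarrow> 'd vtx \<Rightarrow> 'd vtx set set" where
  "edge_orbit x y = {{translate c x, translate c y} | c. True}"

text \<open>Indeterminates: lambda, one e per edge orbit, one V(v) per v in W.\<close>
datatype 'd var = Lam | Evar "'d vtx set set" | Vvar nat

type_synonym 'd mpoly = "('d var \<Rightarrow>\<^sub>0 nat) \<Rightarrow>\<^sub>0 int"

definition PVar :: "'d var \<Rightarrow> 'd mpoly" where
  "PVar x = Poly_Mapping.single (Poly_Mapping.single x 1) 1"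

text \<open>Entry (v,u) of M(1,lambda,e,V) = lambda I - H(1,e,V), where
  H(z,e,V)_{v,u} = delta_{v,u} V(v) - sum over alpha with v ~ alpha+u of e_(v,alpha+u) z^alpha.\<close>
definition charmat_one :: "('d::finite vtx \<Rightarrow> 'd vtx \<Rightarrow> bool) \<Rightarrow> nat \<Rightarrow> nat \<Rightarrow> 'd mpoly" where
  "charmat_one adj v u =
     (if v = u then PVar Lam - PVar (Vvar v) else 0)
     + (\<Sum>\<alpha>\<in>{\<alpha>. adj (v, 0) (u, \<alpha>)}. PVar (Evar (edge_orbit (v, 0) (u, \<alpha>))))"

definition perm_term :: "nat \<Rightarrow> (nat \<Rightarrow> nat \<Rightarrow> 'a::comm_ring_1) \<Rightarrow> (nat \<Rightarrow> nat) \<Rightarrow> 'a" where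
  "perm_term n f w = (\<Prod>i<n. f i (w i))"

definition det_poly :: "nat \<Rightarrow> (nat \<Rightarrow> nat \<Rightarrow> 'a::comm_ring_1) \<Rightarrow> 'a" where
  "det_poly n f = (\<Sum>w\<in>{p. p permutes {0..<n}}. of_int (sign w) * perm_term n f w)"

definition cancellation_free :: "nat \<Rightarrow> (nat \<Rightarrow> nat \<Rightarrow> 'd mpoly) \<Rightarrow> bool" where
  "cancellation_free n f \<longleftrightarrow>
     (\<forall>w\<in>{p. p permutes {0..<n}}. perm_term n f w \<noteq> 0 \<longrightarrow>
        Poly_Mapping.keys (perm_term n f w) \<subseteq> Poly_Mapping.keys (det_poly n f))"

end

(* Weight \<lambda> and the edge variables by +1 and each V(v) by -1. Every entry of M(1) is sign
   coherent for this weight (each coefficient has the sign of the weight of its monomial), hence so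
   is every permutation term M_w. A monomial of M_w picks one variable from each entry (i, w i); for
   w i \<noteq> i it is an edge variable whose orbit joins i and w i, so the monomial determines the set of
   undirected edges {i, w i} of w. This set determines w up to inverting some of its cycles, hence
   determines sgn w. So all terms sgn(w) M_w containing a given monomial contribute coefficients of
   the same sign, and nothing cancels. *)

theory Submission
  imports Defs
begin

lemma Sum_any_nonneg: "(\<And>a. 0 \<le> g a) \<Longrightarrow> 0 \<le> (Sum_any g :: 'b::ordered_comm_monoid_add)"
  by (simp add: Sum_any.expand_set sum_nonneg)

lemma Sum_any_right_distrib_no_zero_divisors:
  fixes r :: "'a::semiring_no_zero_divisors"
  shows "r * Sum_any g = (\<Sum>a. r * g a)"
proof (cases "r = 0 \<or> finite {a. g a \<noteq> 0}")
  case True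
  then show ?thesis
    by (auto simp: Sum_any_right_distrib)
next
  case False
  then have "infinite {a. r * g a \<noteq> 0}"
    by simp
  with False show ?thesis
    by simp
qed

lemma lookup_of_int_mult:
  fixes P :: "'m::comm_monoid_add \<Rightarrow>\<^sub>0 'b::comm_ring_1"
  shows "Poly_Mapping.lookup (of_int c * P) m = of_int c * Poly_Mapping.lookup P m"
  by (simp add: lookup_mult lookup_of_int when_mult mult_when)

lemma keys_add_eq_Un:
  "Poly_Mapping.keys (a + b :: 'v \<Rightarrow>\<^sub>0 'b::canonically_ordered_monoid_add)
    = Poly_Mapping.keys a \<union> Poly_Mapping.keys b"
  by (auto simp: in_keys_iff lookup_add)

lemma keys_prod_of_variables:
  fixes g :: "'i \<Rightarrow> ('v \<Rightarrow>\<^sub>0 nat) \<Rightarrow>\<^sub>0 'a::comm_semiring_1"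
  assumes "finite I"
    and "\<And>i. i \<in> I \<Longrightarrow> Poly_Mapping.keys (g i) \<subseteq> {Poly_Mapping.single y 1 | y. A i y}"
    and "m \<in> Poly_Mapping.keys (\<Prod>i\<in>I. g i)"
  shows "\<exists>x. (\<forall>i\<in>I. A i (x i)) \<and> Poly_Mapping.keys m = x ` I"
  using assms
proof (induction I arbitrary: m rule: finite_induct)
  case empty
  then show ?case
    by simp
next
  case (insert i I)
  have "m \<in> Poly_Mapping.keys (g i * (\<Prod>i\<in>I. g i))"
    using insert.hyps insert.prems(2) by simp
  then obtain a b where m: "m = a + b" and a: "a \<in> Poly_Mapping.keys (g i)"
    and b: "b \<in> Poly_Mapping.keys (\<Prod>i\<in>I. g i)"
    using keys_mult[of "g i"] by blast
  have "a \<in> {Poly_Mapping.single y 1 | y. A i y}"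
    using a insert.prems(1)[of i] by blast
  then obtain y where y: "a = Poly_Mapping.single y 1" "A i y"
    by blast
  have "\<exists>x. (\<forall>j\<in>I. A j (x j)) \<and> Poly_Mapping.keys b = x ` I"
    by (rule insert.IH) (use insert.prems(1) b in auto)
  then obtain x where x: "\<forall>j\<in>I. A j (x j)" "Poly_Mapping.keys b = x ` I"
    by blast
  have "(x(i := y)) ` I = x ` I"
    using insert.hyps(2) by (intro image_cong) auto
  then have "Poly_Mapping.keys m = (x(i := y)) ` insert i I"
    unfolding image_insert fun_upd_same by (simp add: m y x keys_add_eq_Un)
  moreover have "\<forall>j\<in>insert i I. A j ((x(i := y)) j)"
    using insert.hyps(2) x y by auto
  ultimately show ?case
    by blast
qed

definition sign_coherent :: "('m \<Rightarrow> int) \<Rightarrow> ('m \<Rightarrow>\<^sub>0 int) \<Rightarrow> bool" where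
  "sign_coherent \<sigma> P \<longleftrightarrow> (\<forall>m. 0 \<le> \<sigma> m * Poly_Mapping.lookup P m)"

lemma sign_coherent_single: "0 \<le> \<sigma> m * c \<Longrightarrow> sign_coherent \<sigma> (Poly_Mapping.single m c)"
  by (simp add: sign_coherent_def lookup_single when_def)

lemma sign_coherent_zero: "sign_coherent \<sigma> 0"
  by (simp add: sign_coherent_def)

lemma sign_coherent_add:
  "sign_coherent \<sigma> P \<Longrightarrow> sign_coherent \<sigma> Q \<Longrightarrow> sign_coherent \<sigma> (P + Q)"
  by (simp add: sign_coherent_def lookup_add distrib_left)

lemma sign_coherent_sum:
  "(\<And>i. i \<in> I \<Longrightarrow> sign_coherent \<sigma> (P i)) \<Longrightarrow> sign_coherent \<sigma> (\<Sum>i\<in>I. P i)"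
  by (induction I rule: infinite_finite_induct) (auto simp: sign_coherent_zero sign_coherent_add)

lemma sign_coherent_mult:
  fixes \<sigma> :: "'m::comm_monoid_add \<Rightarrow> int"
  assumes \<sigma>_add: "\<And>a b. \<sigma> (a + b) = \<sigma> a * \<sigma> b"
    and P: "sign_coherent \<sigma> P" and Q: "sign_coherent \<sigma> Q"
  shows "sign_coherent \<sigma> (P * Q)"
  unfolding sign_coherent_def
proof
  fix k
  let ?p = "\<lambda>l. \<sigma> l * Poly_Mapping.lookup P l" and ?q = "\<lambda>l. \<sigma> l * Poly_Mapping.lookup Q l"
  have "\<sigma> k * Poly_Mapping.lookup (P * Q) k
      = (\<Sum>l. \<Sum>q. \<sigma> k * (Poly_Mapping.lookup P l * Poly_Mapping.lookup Q q) when k = l + q)"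
    by (simp add: lookup_mult Sum_any_right_distrib_no_zero_divisors mult_when)
  also have "\<dots> = (\<Sum>l. \<Sum>q. ?p l * ?q q when k = l + q)"
    by (intro Sum_any.cong) (auto simp: when_def \<sigma>_add)
  also have "\<dots> \<ge> 0"
    using P Q by (auto simp: sign_coherent_def when_def intro!: Sum_any_nonneg)
  finally show "0 \<le> \<sigma> k * Poly_Mapping.lookup (P * Q) k" .
qed

lemma sign_coherent_prod:
  fixes \<sigma> :: "'m::comm_monoid_add \<Rightarrow> int"
  assumes \<sigma>_add: "\<And>a b. \<sigma> (a + b) = \<sigma> a * \<sigma> b"
    and P: "\<And>i. i \<in> I \<Longrightarrow> sign_coherent \<sigma> (P i)"
  shows "sign_coherent \<sigma> (\<Prod>i\<in>I. P i)"
proof -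
  have "0 \<le> \<sigma> 0 * \<sigma> 0"
    by simp
  then have "sign_coherent \<sigma> 1"
    by (simp add: sign_coherent_def lookup_one when_def flip: \<sigma>_add)
  with P show ?thesis
    by (induction I rule: infinite_finite_induct) (auto simp: sign_coherent_mult[OF \<sigma>_add])
qed

lemma in_keys_signed_sum:
  fixes P :: "'a \<Rightarrow> ('m::comm_monoid_add \<Rightarrow>\<^sub>0 int)" and s :: "'a \<Rightarrow> int"
  assumes "finite A" "a \<in> A" and m: "m \<in> Poly_Mapping.keys (P a)" and "\<sigma> m \<noteq> 0" "s a \<noteq> 0"
    and coherent: "\<And>b. b \<in> A \<Longrightarrow> sign_coherent \<sigma> (P b)"
    and same_sign: "\<And>b. b \<in> A \<Longrightarrow> m \<in> Poly_Mapping.keys (P b) \<Longrightarrow> s b = s a"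
  shows "m \<in> Poly_Mapping.keys (\<Sum>b\<in>A. of_int (s b) * P b)"
proof -
  have "\<sigma> m * s a * Poly_Mapping.lookup (\<Sum>b\<in>A. of_int (s b) * P b) m
      = (\<Sum>b\<in>A. s a * s b * (\<sigma> m * Poly_Mapping.lookup (P b) m))"
    unfolding lookup_sum lookup_of_int_mult sum_distrib_left by (simp add: ac_simps)
  also have "\<dots> > 0"
  proof (rule sum_pos2[OF \<open>finite A\<close> \<open>a \<in> A\<close>])
    show "0 < s a * s a * (\<sigma> m * Poly_Mapping.lookup (P a) m)"
      using coherent[OF \<open>a \<in> A\<close>] m \<open>\<sigma> m \<noteq> 0\<close> \<open>s a \<noteq> 0\<close>
      by (auto simp: sign_coherent_def in_keys_iff order_le_less zero_less_mult_iff)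
    show "0 \<le> s a * s b * (\<sigma> m * Poly_Mapping.lookup (P b) m)" if "b \<in> A" for b
      using coherent[OF that] same_sign[OF that] by (cases "m \<in> Poly_Mapping.keys (P b)")
        (auto simp: sign_coherent_def in_keys_iff)
  qed
  finally show ?thesis
    by (auto simp: in_keys_iff)
qed

definition moved_edges :: "('a \<Rightarrow> 'a) \<Rightarrow> 'a set set" where
  "moved_edges w = {{i, w i} | i. w i \<noteq> i}"

lemma moved_if_moved_edges_eq:
  assumes w': "inj w'" and E: "moved_edges w = moved_edges w'" and moved: "w i \<noteq> i"
  shows "w' i \<noteq> i"
proof
  assume fixed: "w' i = i"
  have "{i, w i} \<in> moved_edges w'"
    using E moved by (auto simp: moved_edges_def)
  then obtain k where "w' k \<noteq> k" "{k, w' k} = {i, w i}"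
    by (auto simp: moved_edges_def)
  then have "w' (w i) = w' i"
    using fixed by (auto simp: doubleton_eq_iff)
  with w' moved show False
    by (simp add: inj_eq)
qed

lemma moved_edges_eq_inverse_on_disagreement:
  assumes w: "inj w" and w': "inj w'" and E: "moved_edges w = moved_edges w'" and R: "w' i \<noteq> w i"
  shows "w (w' i) = i"
proof -
  have "w i \<noteq> i"
    using R moved_if_moved_edges_eq[OF w E[symmetric], of i] by auto
  then have "w' i \<noteq> i"
    using moved_if_moved_edges_eq[OF w' E] by blast
  then have "{i, w' i} \<in> moved_edges w"
    using E by (auto simp: moved_edges_def)
  then obtain j where "w j \<noteq> j" "{j, w j} = {i, w' i}"
    by (auto simp: moved_edges_def)
  with R show ?thesis
    by (auto simp: doubleton_eq_iff)
qed

lemma moved_edges_eq_disagreement_closed: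
  assumes w: "inj w" and w': "inj w'" and E: "moved_edges w = moved_edges w'" and R: "w' i \<noteq> w i"
  shows "w' (w i) \<noteq> w (w i)"
proof
  assume agree: "w' (w i) = w (w i)"
  have inverse: "w (w' i) = i"
    using moved_edges_eq_inverse_on_disagreement[OF w w' E R] .
  have "w i \<noteq> i"
    using R moved_if_moved_edges_eq[OF w E[symmetric], of i] by auto
  then have "{i, w i} \<in> moved_edges w'"
    using E by (auto simp: moved_edges_def)
  then obtain k where "w' k \<noteq> k" "{k, w' k} = {i, w i}"
    by (auto simp: moved_edges_def)
  with R agree have "w (w i) = i"
    by (auto simp: doubleton_eq_iff)
  with inverse have "w (w' i) = w (w i)"
    by simp
  with w R show False
    by (simp add: inj_eq)
qed

lemma sign_eq_if_moved_edges_eq: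
  assumes w: "permutation w" and w': "permutation w'" and E: "moved_edges w = moved_edges w'"
  shows "sign w = sign w'"
proof -
  have inj: "inj w" "inj w'"
    using w w' by (simp_all add: bij_is_inj permutation_bijective)
  define R where "R = {i. w' i \<noteq> w i}"
  have "R \<subseteq> {i. w i \<noteq> i} \<union> {i. w' i \<noteq> i}"
    by (auto simp: R_def)
  then have "finite R"
    by (rule finite_subset) (simp add: permutation_finite_support w w')
  moreover have "w ` R \<subseteq> R"
    using moved_edges_eq_disagreement_closed[OF inj E] by (auto simp: R_def)
  moreover have "inj_on w R"
    using inj(1) by (rule inj_on_subset) simp
  ultimately have "bij_betw w R R"
    by (simp add: bij_betw_def endo_inj_surj)
  define u where "u = restrict_id w R"
  have u: "permutation u"
    using \<open>bij_betw w R R\<close> \<open>finite R\<close>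
    by (simp add: u_def permutes_imp_permutation permutes_restrict_id)
  have inverse_on_R: "w (w' i) = i" if "i \<in> R" for i
    using that moved_edges_eq_inverse_on_disagreement[OF inj E] by (simp add: R_def)
  \<comment> \<open>w' is w outside the w-invariant set R and the inverse of w on R.\<close>
  have "w = w' \<circ> u \<circ> u"
  proof
    fix k
    show "w k = (w' \<circ> u \<circ> u) k"
    proof (cases "k \<in> R")
      case True
      with \<open>w ` R \<subseteq> R\<close> have "w k \<in> R" "w (w k) \<in> R"
        by auto
      with inverse_on_R[of "w (w k)"] inj(1) have "w' (w (w k)) = w k"
        by (simp add: inj_eq)
      with \<open>w k \<in> R\<close> True show ?thesis
        by (simp add: u_def)
    next
      case False
      then show ?thesis
        by (simp add: u_def R_def)
    qed
  qed
  then have "sign w = sign (w' \<circ> u \<circ> u)"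
    by (rule arg_cong)
  also have "\<dots> = sign w' * (sign u * sign u)"
    by (simp add: sign_compose permutation_compose u w')
  finally show ?thesis
    by simp
qed

definition V_parity :: "nat \<Rightarrow> ('d var \<Rightarrow>\<^sub>0 nat) \<Rightarrow> int" where
  "V_parity n m = (-1) ^ (\<Sum>v<n. Poly_Mapping.lookup m (Vvar v))"

lemma V_parity_add: "V_parity n (a + b) = V_parity n a * V_parity n b"
  by (simp add: V_parity_def lookup_add sum.distrib power_add)

lemma V_parity_single:
  "V_parity n (Poly_Mapping.single x 1) = (if x \<in> Vvar ` {..<n} then -1 else 1)"
  by (cases x) (auto simp: V_parity_def lookup_single when_def)

lemma sign_coherent_charmat_one:
  fixes adj :: "'d::finite vtx \<Rightarrow> 'd vtx \<Rightarrow> bool"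
  assumes "v < n"
  shows "sign_coherent (V_parity n) (charmat_one adj v u)"
proof -
  have positive: "sign_coherent (V_parity n) (PVar x)" if "x \<notin> Vvar ` {..<n}" for x :: "'d var"
    unfolding PVar_def using that V_parity_single[of n x] by (intro sign_coherent_single) simp
  have "sign_coherent (V_parity n) (- PVar (Vvar v :: 'd var))"
    unfolding PVar_def single_uminus[symmetric] using assms V_parity_single[of n "Vvar v :: 'd var"]
    by (intro sign_coherent_single) simp
  then have "sign_coherent (V_parity n) (PVar Lam - PVar (Vvar v :: 'd var))"
    unfolding diff_conv_add_uminus by (intro sign_coherent_add positive) auto
  then show ?thesis
    unfolding charmat_one_def
    by (auto intro!: sign_coherent_add sign_coherent_sum sign_coherent_zero positive)
qed

definition var_ends :: "'d var \<Rightarrow> nat set" where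
  "var_ends x = (case x of Evar Ob \<Rightarrow> fst ` \<Union>Ob | _ \<Rightarrow> {})"

definition joins :: "nat \<Rightarrow> nat \<Rightarrow> 'd var \<Rightarrow> bool" where
  "joins v u x \<longleftrightarrow> var_ends x \<subseteq> {v, u} \<and> (v \<noteq> u \<longrightarrow> var_ends x = {v, u})"

lemma var_ends_edge_orbit: "var_ends (Evar (edge_orbit (v, 0) (u, \<alpha>))) = {v, u}"
proof -
  have "{(v, 0), (u, \<alpha>)} \<in> edge_orbit (v, 0) (u, \<alpha>)"
    unfolding edge_orbit_def translate_def by (rule CollectI, rule exI[of _ 0]) simp
  then have "{v, u} \<subseteq> fst ` \<Union>(edge_orbit (v, 0) (u, \<alpha>))"
    by force
  moreover have "fst ` \<Union>(edge_orbit (v, 0) (u, \<alpha>)) \<subseteq> {v, u}"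
    unfolding edge_orbit_def translate_def by auto
  ultimately have "fst ` \<Union>(edge_orbit (v, 0) (u, \<alpha>)) = {v, u}"
    by blast
  then show ?thesis
    by (simp add: var_ends_def)
qed

lemma keys_charmat_one:
  fixes adj :: "'d::finite vtx \<Rightarrow> 'd vtx \<Rightarrow> bool"
  shows "Poly_Mapping.keys (charmat_one adj v u) \<subseteq> {Poly_Mapping.single x 1 | x. joins v u x}"
proof -
  have "joins v v (Lam :: 'd var)" "joins v v (Vvar v :: 'd var)"
    by (simp_all add: joins_def var_ends_def)
  moreover have "joins v u (Evar (edge_orbit (v, 0) (u, \<alpha>)))" for \<alpha> :: "'d \<Rightarrow> int"
    by (simp add: joins_def var_ends_edge_orbit)
  ultimately show ?thesis
    unfolding charmat_one_def PVar_def
    by (auto dest!: set_mp[OF keys_add] set_mp[OF keys_sum] set_mp[OF keys_diff] split: if_splits)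
      blast+
qed

(* Loops of the quotient graph give edge variables with a single end; they, \<lambda> and V are ignored. *)
definition monomial_edges :: "('d var \<Rightarrow>\<^sub>0 nat) \<Rightarrow> nat set set" where
  "monomial_edges m = {var_ends x | x. x \<in> Poly_Mapping.keys m \<and> card (var_ends x) = 2}"

lemma joins_edges_eq_moved_edges:
  assumes w: "w permutes {..<n}" and x: "\<forall>i<n. joins i (w i) (x i)"
  shows "{var_ends y | y. y \<in> x ` {..<n} \<and> card (var_ends y) = 2} = moved_edges w"
proof (intro equalityI subsetI)
  fix e
  assume "e \<in> {var_ends y | y. y \<in> x ` {..<n} \<and> card (var_ends y) = 2}"
  then obtain i where i: "i < n" and e: "e = var_ends (x i)" and card: "card (var_ends (x i)) = 2"
    by blast
  have "w i \<noteq> i"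
  proof
    assume "w i = i"
    with x[rule_format, OF i] have "var_ends (x i) \<subseteq> {i}"
      by (simp add: joins_def)
    with card show False
      using card_mono[of "{i}" "var_ends (x i)"] by simp
  qed
  with x i e show "e \<in> moved_edges w"
    by (auto simp: joins_def moved_edges_def)
next
  fix e
  assume "e \<in> moved_edges w"
  then obtain i where moved: "w i \<noteq> i" and e: "e = {i, w i}"
    by (auto simp: moved_edges_def)
  with w have "i < n"
    by (meson lessThan_iff permutes_not_in)
  with x moved have "var_ends (x i) = {i, w i}"
    by (simp add: joins_def)
  with \<open>i < n\<close> moved e show "e \<in> {var_ends y | y. y \<in> x ` {..<n} \<and> card (var_ends y) = 2}"
    by auto
qed

lemma monomial_edges_perm_term:
  fixes adj :: "'d::finite vtx \<Rightarrow> 'd vtx \<Rightarrow> bool"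
  assumes w: "w permutes {..<n}" and m: "m \<in> Poly_Mapping.keys (perm_term n (charmat_one adj) w)"
  shows "monomial_edges m = moved_edges w"
proof -
  obtain x where "\<forall>i\<in>{..<n}. joins i (w i) (x i)" "Poly_Mapping.keys m = x ` {..<n}"
    using keys_prod_of_variables[OF _ keys_charmat_one m[unfolded perm_term_def]] by blast
  with w show ?thesis
    unfolding monomial_edges_def by (simp add: joins_edges_eq_moved_edges)
qed

lemma sign_coherent_perm_term:
  fixes adj :: "'d::finite vtx \<Rightarrow> 'd vtx \<Rightarrow> bool"
  shows "sign_coherent (V_parity n) (perm_term n (charmat_one adj) w)"
  unfolding perm_term_def
  by (rule sign_coherent_prod[where \<sigma> = "V_parity n", OF V_parity_add],
      rule sign_coherent_charmat_one) simp

lemma sign_eq_if_common_monomial: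
  fixes adj :: "'d::finite vtx \<Rightarrow> 'd vtx \<Rightarrow> bool"
  assumes w: "w permutes {..<n}" and w': "w' permutes {..<n}"
    and m: "m \<in> Poly_Mapping.keys (perm_term n (charmat_one adj) w)"
    and m': "m \<in> Poly_Mapping.keys (perm_term n (charmat_one adj) w')"
  shows "sign w' = sign w"
proof (rule sign_eq_if_moved_edges_eq)
  show "permutation w'" "permutation w"
    using w w' by (simp_all add: permutes_imp_permutation[OF finite_lessThan])
  show "moved_edges w' = moved_edges w"
    using monomial_edges_perm_term[OF w m] monomial_edges_perm_term[OF w' m'] by simp
qed

theorem corollary2p4:
  fixes adj :: "'d::finite vtx \<Rightarrow> 'd vtx \<Rightarrow> bool" and n :: nat
  assumes "periodic_graph n adj"
  shows "cancellation_free n (charmat_one adj)"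
  unfolding cancellation_free_def det_poly_def atLeast0LessThan
proof (intro ballI impI subsetI)
  fix w m
  assume w: "w \<in> {p. p permutes {..<n}}"
    and m: "m \<in> Poly_Mapping.keys (perm_term n (charmat_one adj) w)"
  show "m \<in> Poly_Mapping.keys
      (\<Sum>w'\<in>{p. p permutes {..<n}}. of_int (sign w') * perm_term n (charmat_one adj) w')"
  proof (rule in_keys_signed_sum[where \<sigma> = "V_parity n"])
    show "V_parity n m \<noteq> 0" "sign w \<noteq> 0"
      by (simp_all add: V_parity_def sign_def)
    show "sign w' = sign w"
      if "w' \<in> {p. p permutes {..<n}}" "m \<in> Poly_Mapping.keys (perm_term n (charmat_one adj) w')" for w'
      using sign_eq_if_common_monomial w m that by blast
  qed (use w m in \<open>simp_all add: finite_permutations sign_coherent_perm_term\<close>)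
qed

end
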